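(* Let $\Gamma$ be a cubic distance-regular graph of diameter $D$ with intersection array $\{b_0,\dots,b_{D-1};c_1,\dots,c_D\}$, and let $(u_{ij})$ be the generators of $C(G_{aut}^+(\Gamma))$. Let $2\le m\le D$ and assume $u_{ij}u_{kl}=u_{kl}u_{ij}$ for all vertices with $d(i,k)=d(j,l)\le m-1$. If either (i) $b_{m-1}=1$, or (ii) $m<D$, $b_{m-1}=2$, $b_m=c_m=1$ and the girth satisfies $g(\Gamma)\ge 2m$, then $u_{ij}u_{kl}=u_{kl}u_{ij}$ for all vertices with $d(i,k)=d(j,l)=m$.
   Context: A connected regular graph $\Gamma=(V,E)$ of diameter $D$ is distance-regular with intersection array $\{b_0,\dots,b_{D-1};c_1,\dots,c_D\}$ if for any vertices $v,w$ with $d(v,w)=i$, exactly $b_i$ neighbors of $w$ are at distance $i+1$ from $v$ and exactly $c_i$ neighbors of $w$ are at distance $i-1$ from $v$ ($d$ the graph distance). Cubic means $3$-regular; the girth is the length of a shortest cycle. $C(G_{aut}^+(\Gamma))$ is the universal unital $C^*$-algebra generated by $u_{ij}$, $i,j\in V=\{1,\dots,n\}$, with relations: (R1) $u_{ij}=u_{ij}^*=u_{ij}^2$; (R2) $\sum_{l} u_{il}=1=\sum_{l} u_{li}$ for all $i$; (R3) $u_{ij}u_{kl}=u_{kl}u_{ij}=0$ whenever exactly one of $(i,k)\in E$, $(j,l)\in E$ holds. *)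

theory Defs
  imports Complex_Main "HOL-Library.Extended_Nat"
begin

class cstar_algebra = real_normed_algebra_1 + banach +
  fixes scaleC :: "complex \<Rightarrow> 'a \<Rightarrow> 'a"
    and cstar :: "'a \<Rightarrow> 'a"
  assumes scaleC_add_right: "scaleC a (x + y) = scaleC a x + scaleC a y"
    and scaleC_add_left: "scaleC (a + b) x = scaleC a x + scaleC b x"
    and scaleC_scaleC: "scaleC a (scaleC b x) = scaleC (a * b) x"
    and scaleC_one: "scaleC 1 x = x"
    and scaleR_scaleC: "scaleR r x = scaleC (complex_of_real r) x"
    and scaleC_mult_left: "scaleC a x * y = scaleC a (x * y)"
    and scaleC_mult_right: "x * scaleC a y = scaleC a (x * y)"
    and norm_scaleC: "norm (scaleC a x) = cmod a * norm x"
    and cstar_cstar: "cstar (cstar x) = x"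
    and cstar_add: "cstar (x + y) = cstar x + cstar y"
    and cstar_scaleC: "cstar (scaleC a x) = scaleC (cnj a) (cstar x)"
    and cstar_mult: "cstar (x * y) = cstar y * cstar x"
    and cstar_identity: "norm (cstar x * x) = norm x * norm x"

definition gdist :: "('v \<Rightarrow> 'v \<Rightarrow> bool) \<Rightarrow> 'v \<Rightarrow> 'v \<Rightarrow> nat" where
  "gdist E x y = (LEAST n. (E ^^ n) x y)"

definition connected_graph :: "('v \<Rightarrow> 'v \<Rightarrow> bool) \<Rightarrow> bool" where
  "connected_graph E \<longleftrightarrow> (\<forall>x y. \<exists>n. (E ^^ n) x y)"

definition diameter :: "('v \<Rightarrow> 'v \<Rightarrow> bool) \<Rightarrow> nat" where
  "diameter E = Max {gdist E x y | x y. True}"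

definition distance_regular ::
  "('v \<Rightarrow> 'v \<Rightarrow> bool) \<Rightarrow> nat \<Rightarrow> (nat \<Rightarrow> nat) \<Rightarrow> (nat \<Rightarrow> nat) \<Rightarrow> bool" where
  "distance_regular E D b c \<longleftrightarrow>
     connected_graph E \<and> diameter E = D \<and>
     (\<forall>v w. gdist E v w < D \<longrightarrow>
        card {x. E w x \<and> gdist E v x = gdist E v w + 1} = b (gdist E v w)) \<and>
     (\<forall>v w. 1 \<le> gdist E v w \<longrightarrow> gdist E v w \<le> D \<longrightarrow>
        card {x. E w x \<and> gdist E v x = gdist E v w - 1} = c (gdist E v w))"

definition has_cycle_of_length :: "('v \<Rightarrow> 'v \<Rightarrow> bool) \<Rightarrow> nat \<Rightarrow> bool" where
  "has_cycle_of_length E k \<longleftrightarrow> 3 \<le> k \<and>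
     (\<exists>f :: nat \<Rightarrow> 'v. inj_on f {..<k} \<and> (\<forall>i<k. E (f i) (f (Suc i mod k))))"

definition girth :: "('v \<Rightarrow> 'v \<Rightarrow> bool) \<Rightarrow> enat" where
  "girth E = (INF k \<in> {k. has_cycle_of_length E k}. enat k)"

definition quantum_aut_rel ::
  "('v::finite \<Rightarrow> 'v \<Rightarrow> bool) \<Rightarrow> ('v \<Rightarrow> 'v \<Rightarrow> 'a::cstar_algebra) \<Rightarrow> bool" where
  "quantum_aut_rel E u \<longleftrightarrow>
     (\<forall>i j. u i j = cstar (u i j) \<and> u i j * u i j = u i j) \<and>
     (\<forall>i. (\<Sum>l\<in>UNIV. u i l) = 1 \<and> (\<Sum>l\<in>UNIV. u l i) = 1) \<and>
     (\<forall>i j k l. E i k \<noteq> E j l \<longrightarrow> u i j * u k l = 0 \<and> u k l * u i j = 0)"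

end

theory Submission
  imports Defs
begin

text \<open>Write \<open>A = u i j\<close> and \<open>B = u k l\<close>. If \<open>X\<close> is self-adjoint, commutes with \<open>A\<close>, and
  \<open>A B = A X\<close>, then \<open>B A = (A B)\<^sup>* = (A X)\<^sup>* = X A = A B\<close>. Such a witness \<open>X\<close> is assembled from
  entries \<open>u p q\<close> with \<open>d(i,p) = d(j,q) < m\<close>, which commute with \<open>A\<close> by hypothesis. To compare
  \<open>A B\<close> with \<open>A X\<close> one inserts the partition of unity of a row between \<open>A\<close> and \<open>B\<close>; since
  \<open>u i j u p q = 0\<close> whenever \<open>d(i,p) \<noteq> d(j,q)\<close>, only few terms survive, and the intersection
  numbers (in case (ii) together with the girth) determine which.\<close>

lemma successively_iff_nth:
  "successively P xs \<longleftrightarrow> (\<forall>i. Suc i < length xs \<longrightarrow> P (xs ! i) (xs ! Suc i))"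
  by (induction P xs rule: successively.induct) (auto simp: nth_Cons less_Suc_eq_0_disj)

lemma successively_closed_nth:
  assumes "successively P (xs @ [hd xs])" and "i < length xs"
  shows "P (xs ! i) (xs ! (Suc i mod length xs))"
proof -
  have "P ((xs @ [hd xs]) ! i) ((xs @ [hd xs]) ! Suc i)"
    using assms by (simp add: successively_iff_nth)
  moreover have "(xs @ [hd xs]) ! Suc i = xs ! (Suc i mod length xs)"
  proof (cases "Suc i < length xs")
    case False
    then have "Suc i = length xs" using assms(2) by simp
    then show ?thesis by (cases xs) (auto simp: nth_append)
  qed (simp add: nth_append)
  ultimately show ?thesis using assms(2) by (simp add: nth_append)
qed

lemma girth_le_cycle:
  assumes "distinct xs" "3 \<le> length xs" "successively E (xs @ [hd xs])"
  shows "girth E \<le> enat (length xs)"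
proof -
  have "has_cycle_of_length E (length xs)"
    unfolding has_cycle_of_length_def
  proof (intro conjI exI[of _ "nth xs"])
    show "inj_on (nth xs) {..<length xs}" using assms(1) by (simp add: inj_on_nth)
    show "\<forall>i<length xs. E (xs ! i) (xs ! (Suc i mod length xs))"
      using assms(3) successively_closed_nth by blast
  qed (rule assms(2))
  then show ?thesis unfolding girth_def by (auto intro: INF_lower)
qed

lemma mult_sum_commute:
  fixes a :: "'b::semiring_0"
  assumes "\<And>x. x \<in> S \<Longrightarrow> a * f x = f x * a"
  shows "a * (\<Sum>x\<in>S. f x) = (\<Sum>x\<in>S. f x) * a"
  using assms by (simp add: sum_distrib_left sum_distrib_right)

context
  fixes A B P S :: "'a::semiring_0"
  assumes AP: "A * P = P * A"
begin

lemma commute_sandwich: "A * S = S * A \<Longrightarrow> A * (P * S * P) = (P * S * P) * A"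
  using AP by (metis mult.assoc)

lemma sandwich_annihilated: "P * B = B * P \<Longrightarrow> A * S * B = 0 \<Longrightarrow> A * (P * S * P) * B = 0"
proof -
  assume PB: "P * B = B * P" and ASB: "A * S * B = 0"
  have "A * (P * S * P) * B = P * (A * S * B) * P" using AP PB by (metis mult.assoc)
  then show ?thesis using ASB by simp
qed

lemma sandwich_absorbed:
  assumes PB: "P * B = B * P" and PP: "P * P = P"
    and ASB: "A * S * B = A * B" and APB: "A * P * B = A * B"
  shows "A * (P * S * P) * B = A * B"
proof -
  have "A * (P * S * P) * B = P * (A * S * B) * P" using AP PB by (metis mult.assoc)
  also have "\<dots> = (P * P) * (A * B)" using ASB AP PB by (metis mult.assoc)
  finally show ?thesis using PP APB AP by (metis mult.assoc)
qed

end

lemma cstar_zero: "cstar (0::'a::cstar_algebra) = 0"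
  using cstar_add[of "0::'a" 0] by simp

lemma cstar_sum: "cstar (sum f A) = (\<Sum>x\<in>A. cstar (f x :: 'a::cstar_algebra))"
  by (induction A rule: infinite_finite_induct) (auto simp: cstar_zero cstar_add)

lemma commute_via_selfadjoint:
  fixes A B X :: "'a::cstar_algebra"
  assumes "cstar A = A" "cstar B = B" "cstar X = X" "A * X = X * A" "A * B = A * X"
  shows "A * B = B * A"
proof -
  have "B * A = cstar (A * B)" using assms(1,2) by (simp add: cstar_mult)
  also have "\<dots> = cstar (A * X)" using assms(5) by simp
  also have "\<dots> = X * A" using assms(1,3) by (simp add: cstar_mult)
  finally show ?thesis using assms(4,5) by simp
qed

context
  fixes E :: "'v::finite \<Rightarrow> 'v \<Rightarrow> bool" and u :: "'v \<Rightarrow> 'v \<Rightarrow> 'a::cstar_algebra"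
  assumes rel: "quantum_aut_rel E u"
begin

lemma quantum_aut_rel_selfadjoint: "cstar (u i j) = u i j"
  using rel unfolding quantum_aut_rel_def by metis

lemma quantum_aut_rel_idempotent: "u i j * u i j = u i j"
  using rel unfolding quantum_aut_rel_def by blast

lemma quantum_aut_rel_row_sum: "(\<Sum>l\<in>UNIV. u i l) = 1"
  using rel unfolding quantum_aut_rel_def by blast

lemma quantum_aut_rel_adjacency: "E i k \<noteq> E j l \<Longrightarrow> u i j * u k l = 0"
  using rel unfolding quantum_aut_rel_def by blast

lemma quantum_aut_rel_transpose: "quantum_aut_rel E (\<lambda>i j. u j i)"
  using rel unfolding quantum_aut_rel_def by metis

lemma quantum_aut_rel_sum_selfadjoint: "cstar (\<Sum>q\<in>S. u p q) = (\<Sum>q\<in>S. u p q)"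
  by (simp add: cstar_sum quantum_aut_rel_selfadjoint)

lemma mult_eq_sum_insert_row: "a * b = (\<Sum>y\<in>UNIV. a * u z y * b)"
proof -
  have "a * b = a * (\<Sum>y\<in>UNIV. u z y) * b" by (simp add: quantum_aut_rel_row_sum)
  then show ?thesis by (simp add: sum_distrib_left sum_distrib_right)
qed

lemma mult_eq_sum_append_row: "a = (\<Sum>y\<in>UNIV. a * u z y)"
  using mult_eq_sum_insert_row[of a 1] by simp

lemma commute_if_absorbing_witness:
  assumes "cstar X = X" "u i j * X = X * u i j"
    and "\<And>l'. l' \<noteq> l \<Longrightarrow> u i j * X * u k l' = 0" "u i j * X * u k l = u i j * u k l"
  shows "u i j * u k l = u k l * u i j"
proof (rule commute_via_selfadjoint[OF quantum_aut_rel_selfadjoint quantum_aut_rel_selfadjoint assms(1,2)])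
  have "u i j * X = (\<Sum>l'\<in>UNIV. u i j * X * u k l')" by (rule mult_eq_sum_append_row)
  also have "\<dots> = u i j * X * u k l" using assms(3) by (subst sum.remove[of _ l]) auto
  finally show "u i j * u k l = u i j * X" using assms(4) by simp
qed

lemma quantum_aut_rel_walk_orthogonal:
  "(E ^^ Suc n) i k \<Longrightarrow> \<not> (E ^^ Suc n) j l \<Longrightarrow> u i j * u k l = 0"
proof (induction n arbitrary: k l)
  case 0
  then show ?case by (simp add: eq_OO quantum_aut_rel_adjacency)
next
  case (Suc n)
  obtain z where z: "(E ^^ Suc n) i z" "E z k" using Suc.prems(1) by (auto elim: relpowp_Suc_E)
  have "u i j * u z y * u k l = 0" for y
  proof (cases "E y l")
    case True
    then have "\<not> (E ^^ Suc n) j y" using Suc.prems(2) relpowp_Suc_I by metis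
    then show ?thesis using Suc.IH z(1) by simp
  next
    case False
    then show ?thesis using z(2) by (simp add: mult.assoc quantum_aut_rel_adjacency)
  qed
  then show ?case using mult_eq_sum_insert_row[of "u i j" "u k l" z] by simp
qed

end

locale connected_simple_graph =
  fixes E :: "'v::finite \<Rightarrow> 'v \<Rightarrow> bool"
  assumes sym: "\<forall>x y. E x y = E y x"
    and irrefl: "\<forall>x. \<not> E x x"
    and connected: "connected_graph E"
begin

abbreviation d :: "'v \<Rightarrow> 'v \<Rightarrow> nat" where "d \<equiv> gdist E"

lemma walk_gdist: "(E ^^ d x y) x y"
  using connected unfolding gdist_def connected_graph_def by (auto intro: LeastI_ex)

lemma gdist_le_walk: "(E ^^ n) x y \<Longrightarrow> d x y \<le> n"
  unfolding gdist_def by (rule Least_le)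

lemma gdist_eq_0_iff: "d x y = 0 \<longleftrightarrow> x = y"
  using walk_gdist[of x y] gdist_le_walk[of 0 x y] by auto

lemma gdist_eq_1_iff: "d x y = 1 \<longleftrightarrow> E x y"
proof
  assume "d x y = 1"
  then show "E x y" using walk_gdist[of x y] by (simp add: eq_OO)
next
  assume "E x y"
  then have "d x y \<le> 1" "x \<noteq> y" using gdist_le_walk[of 1 x y] irrefl by auto
  then show "d x y = 1" using gdist_eq_0_iff[of x y] by linarith
qed

lemma walk_sym: "(E ^^ n) x y \<Longrightarrow> (E ^^ n) y x"
proof (induction n arbitrary: y)
  case (Suc n)
  then obtain z where "(E ^^ n) x z" "E z y" by (auto elim: relpowp_Suc_E)
  then show ?case using Suc.IH sym by (metis relpowp_Suc_I2)
qed simp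

lemma gdist_sym: "d x y = d y x"
  using gdist_le_walk walk_gdist walk_sym by (meson antisym)

lemma gdist_neighbour_le: "E y z \<Longrightarrow> d x z \<le> d x y + 1"
  using gdist_le_walk[OF relpowp_Suc_I[OF walk_gdist[of x y]]] by simp

lemma gdist_neighbour_cases:
  "E y z \<Longrightarrow> d x z = d x y - 1 \<or> d x z = d x y \<or> d x z = d x y + 1"
  using gdist_neighbour_le[of y z x] gdist_neighbour_le[of z y x] sym by fastforce

lemma gdist_SucE:
  assumes "d x y = Suc n"
  obtains z where "E y z" "d x z = n"
proof -
  from walk_gdist[of x y] assms obtain z where z: "(E ^^ n) x z" "E z y"
    by (auto elim: relpowp_Suc_E)
  then have "d x z = n"
    using gdist_le_walk[OF z(1)] gdist_neighbour_le[OF z(2), of x] assms by simp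
  then show thesis using that z(2) sym by blast
qed

lemma gdist_eq_2E:
  assumes "d x y = 2"
  obtains z where "E x z" "E z y"
proof -
  obtain z where "E y z" "d x z = 1" using gdist_SucE[of x y 1] assms by auto
  then show thesis using that gdist_eq_1_iff sym by blast
qed

lemma gdist_path2_le: "E x y \<Longrightarrow> E y z \<Longrightarrow> d x z \<le> 2"
  using gdist_neighbour_le[of y z x] gdist_eq_1_iff[of x y] by simp

lemma gdist_path3_le: "E x y \<Longrightarrow> E y z \<Longrightarrow> E z w \<Longrightarrow> d x w \<le> 3"
  using gdist_neighbour_le[of z w x] gdist_path2_le[of x y z] by simp

lemma gdist_eq_2_if_path2:
  "E x y \<Longrightarrow> E y z \<Longrightarrow> x \<noteq> z \<Longrightarrow> \<not> E x z \<Longrightarrow> d x z = 2"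
  using gdist_path2_le[of x y z] gdist_eq_0_iff[of x z] gdist_eq_1_iff[of x z] by linarith

text \<open>The walk argument only sees positive distances, hence the conditions \<open>i \<noteq> k\<close> and \<open>j \<noteq> l\<close>.\<close>

lemma quantum_aut_rel_gdist_orthogonal:
  assumes rel: "quantum_aut_rel E u" and "i \<noteq> k" "j \<noteq> l" "d i k \<noteq> d j l"
  shows "u i j * u k l = 0"
proof (cases "d i k < d j l")
  case True
  obtain n where n: "d i k = Suc n" using assms(2) gdist_eq_0_iff by (metis not0_implies_Suc)
  have "\<not> (E ^^ Suc n) j l" using gdist_le_walk[of "Suc n" j l] True n by auto
  then show ?thesis using quantum_aut_rel_walk_orthogonal[OF rel] walk_gdist[of i k] n by simp
next
  case False
  obtain n where n: "d j l = Suc n" using assms(3) gdist_eq_0_iff by (metis not0_implies_Suc)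
  have "\<not> (E ^^ Suc n) i k" using gdist_le_walk[of "Suc n" i k] False assms(4) n by auto
  then show ?thesis
    using quantum_aut_rel_walk_orthogonal[OF quantum_aut_rel_transpose[OF rel]] walk_gdist[of j l] n
    by simp
qed

end

subsection \<open>Layers of a cubic distance-regular graph\<close>

locale cubic_drg =
  fixes E :: "'v::finite \<Rightarrow> 'v \<Rightarrow> bool" and D :: nat and b c :: "nat \<Rightarrow> nat"
  assumes sym: "\<forall>x y. E x y = E y x"
    and irrefl: "\<forall>x. \<not> E x x"
    and cubic: "\<forall>x. card {y. E x y} = 3"
    and drg: "distance_regular E D b c"

sublocale cubic_drg \<subseteq> connected_simple_graph
  by unfold_locales (use sym irrefl drg in \<open>auto simp: distance_regular_def\<close>)

context cubic_drg
begin

lemma gdist_le_diameter: "d x y \<le> D"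
proof -
  have "{d x y | x y. True} = (\<lambda>(x, y). d x y) ` UNIV" by auto
  then have "finite {d x y | x y. True}" by simp
  then show ?thesis using drg unfolding distance_regular_def diameter_def by (auto intro: Max_ge)
qed

lemma card_children: "d v w < D \<Longrightarrow> card {x. E w x \<and> d v x = d v w + 1} = b (d v w)"
  using drg unfolding distance_regular_def by blast

lemma card_parents: "1 \<le> d v w \<Longrightarrow> card {x. E w x \<and> d v x = d v w - 1} = c (d v w)"
  using drg gdist_le_diameter unfolding distance_regular_def by blast

lemma neighbour_set_eq:
  assumes "E y x\<^sub>1" "E y x\<^sub>2" "E y x\<^sub>3" "distinct [x\<^sub>1, x\<^sub>2, x\<^sub>3]"
  shows "{x. E y x} = {x\<^sub>1, x\<^sub>2, x\<^sub>3}"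
proof -
  have "card {x\<^sub>1, x\<^sub>2, x\<^sub>3} = card {x. E y x}" using assms(4) cubic by simp
  then show ?thesis using assms(1-3) by (intro card_seteq[symmetric]) auto
qed

lemma card_layer_neighbours:
  assumes "d v w = t" "1 \<le> t" "t < D"
  shows "card {x. E w x \<and> d v x = t} + b t + c t = 3"
proof -
  let ?C = "{x. E w x \<and> d v x = t - 1}" and ?A = "{x. E w x \<and> d v x = t}"
    and ?B = "{x. E w x \<and> d v x = t + 1}"
  have "{x. E w x} = ?A \<union> ?B \<union> ?C" using gdist_neighbour_cases[of w _ v] assms(1) by auto
  then have "card (?A \<union> ?B \<union> ?C) = 3" by (metis cubic)
  moreover have "card (?A \<union> ?B \<union> ?C) = card (?A \<union> ?B) + card ?C"
    using assms(2) by (intro card_Un_disjoint) auto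
  moreover have "card (?A \<union> ?B) = card ?A + card ?B"
    by (intro card_Un_disjoint) auto
  ultimately show ?thesis using card_children[of v w] card_parents[of v w] assms by simp
qed

lemma parent_exists:
  assumes "1 \<le> d v w"
  shows "\<exists>x. E w x \<and> d v x = d v w - 1"
proof -
  have "d v w = Suc (d v w - 1)" using assms by simp
  then show ?thesis using gdist_SucE by blast
qed

lemma child_exists:
  assumes "d v w < D" "b (d v w) \<noteq> 0"
  shows "\<exists>x. E w x \<and> d v x = d v w + 1"
proof -
  have "{x. E w x \<and> d v x = d v w + 1} \<noteq> {}"
    using card_children[OF assms(1)] assms(2) by (metis card.empty)
  then show ?thesis by blast
qed

lemma no_layer_neighbour_if_b_eq_2:
  assumes "d v w = t" "1 \<le> t" "t < D" "b t = 2" "E w x"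
  shows "d v x \<noteq> t"
proof -
  have "c t \<noteq> 0"
    using parent_exists[of v w] card_parents[of v w] assms(1,2)
      card_eq_0_iff[of "{x. E w x \<and> d v x = t - 1}"] by auto
  then have "card {x. E w x \<and> d v x = t} = 0"
    using card_layer_neighbours[OF assms(1-3)] assms(4) by linarith
  then show ?thesis using assms(5) by simp
qed

lemma card_layer_neighbour_set_eq_1:
  "d v w = t \<Longrightarrow> 1 \<le> t \<Longrightarrow> t < D \<Longrightarrow> b t = 1 \<Longrightarrow> c t = 1 \<Longrightarrow>
    card {x. E w x \<and> d v x = t} = 1"
  using card_layer_neighbours by fastforce

lemma unique_parent_if_c_eq_1:
  assumes "c (d v w) = 1" "1 \<le> d v w" "E w x" "E w y" "d v x = d v w - 1" "d v y = d v w - 1"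
  shows "x = y"
  using card_parents[of v w] assms card_le_Suc0_iff_eq[of "{x. E w x \<and> d v x = d v w - 1}"]
  by auto

lemma unique_child_if_b_eq_1:
  assumes "b (d v w) = 1" "d v w < D" "E w x" "E w y" "d v x = d v w + 1" "d v y = d v w + 1"
  shows "x = y"
  using card_children[of v w] assms card_le_Suc0_iff_eq[of "{x. E w x \<and> d v x = d v w + 1}"]
  by auto

text \<open>If \<open>b 1 = 1\<close>, every neighbour of \<open>v\<close> would be adjacent to exactly one other neighbour of
  \<open>v\<close>, i.e.\ adjacency would be a perfect matching on the three neighbours of \<open>v\<close>.\<close>

lemma b1_ne_1:
  assumes "2 \<le> D"
  shows "b 1 \<noteq> 1"
proof
  assume b1: "b 1 = 1"
  fix v :: 'v
  obtain a\<^sub>1 a\<^sub>2 a\<^sub>3 where N: "{y. E v y} = {a\<^sub>1, a\<^sub>2, a\<^sub>3}" "distinct [a\<^sub>1, a\<^sub>2, a\<^sub>3]"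
    using cubic card_3_iff[of "{y. E v y}"] by auto
  have card_common: "card {x. E w x \<and> E v x} = 1" if "E v w" for w
  proof -
    have dw: "d v w = 1" using that gdist_eq_1_iff by simp
    have "{x. E w x \<and> d v x = 1 - 1} = {v}" using that sym gdist_eq_0_iff by auto
    then have "c 1 = 1" using card_parents[of v w] dw by simp
    moreover have "{x. E w x \<and> d v x = 1} = {x. E w x \<and> E v x}" using gdist_eq_1_iff by auto
    ultimately show ?thesis using card_layer_neighbours[OF dw] assms b1 by simp
  qed
  have common: "\<exists>x. E w x \<and> E v x"
    and unique: "\<And>x y. E w x \<Longrightarrow> E v x \<Longrightarrow> E w y \<Longrightarrow> E v y \<Longrightarrow> x = y"
    if vw: "E v w" for w
  proof -
    obtain z where "{x. E w x \<and> E v x} = {z}"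
      using card_common[OF vw] by (rule card_1_singletonE)
    then have z: "E w x \<and> E v x \<longleftrightarrow> x = z" for x by blast
    then show "\<exists>x. E w x \<and> E v x" by blast
    show "\<And>x y. E w x \<Longrightarrow> E v x \<Longrightarrow> E w y \<Longrightarrow> E v y \<Longrightarrow> x = y" using z by metis
  qed
  have Nv: "E v x \<longleftrightarrow> x = a\<^sub>1 \<or> x = a\<^sub>2 \<or> x = a\<^sub>3" for x using N(1) by blast
  have a: "E v a\<^sub>1" "E v a\<^sub>2" "E v a\<^sub>3" using Nv by simp_all
  have "\<not> E a\<^sub>1 a\<^sub>1" "\<not> E a\<^sub>2 a\<^sub>2" "\<not> E a\<^sub>3 a\<^sub>3" using irrefl by simp_all
  then have "E a\<^sub>1 a\<^sub>2 \<or> E a\<^sub>1 a\<^sub>3" "E a\<^sub>2 a\<^sub>1 \<or> E a\<^sub>2 a\<^sub>3" "E a\<^sub>3 a\<^sub>1 \<or> E a\<^sub>3 a\<^sub>2"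
    using common[OF a(1)] common[OF a(2)] common[OF a(3)] Nv by metis+
  moreover have "\<not> (E a\<^sub>1 a\<^sub>2 \<and> E a\<^sub>1 a\<^sub>3)" "\<not> (E a\<^sub>2 a\<^sub>1 \<and> E a\<^sub>2 a\<^sub>3)"
    "\<not> (E a\<^sub>3 a\<^sub>1 \<and> E a\<^sub>3 a\<^sub>2)"
    using unique[OF a(1), of a\<^sub>2 a\<^sub>3] unique[OF a(2), of a\<^sub>1 a\<^sub>3] unique[OF a(3), of a\<^sub>1 a\<^sub>2] a N(2)
    by auto
  moreover have "E a\<^sub>1 a\<^sub>2 = E a\<^sub>2 a\<^sub>1" "E a\<^sub>1 a\<^sub>3 = E a\<^sub>3 a\<^sub>1" "E a\<^sub>2 a\<^sub>3 = E a\<^sub>3 a\<^sub>2"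
    using sym by simp_all
  ultimately show False by blast
qed

end

subsection \<open>The combinatorics of case (ii)\<close>

locale cubic_drg_ii = cubic_drg +
  fixes m :: nat
  assumes m_ge_2: "2 \<le> m" and m_less_D: "m < D"
    and b_pred_m: "b (m - 1) = 2" and b_m: "b m = 1" and c_m: "c m = 1"
    and girth_ge: "girth E \<ge> enat (2 * m)"
begin

lemma cycle_length_ge:
  "distinct xs \<Longrightarrow> 3 \<le> length xs \<Longrightarrow> successively E (xs @ [hd xs]) \<Longrightarrow> 2 * m \<le> length xs"
  using girth_le_cycle[of xs E] girth_ge order_trans by fastforce

lemma no_triangle: "E x y \<Longrightarrow> E y z \<Longrightarrow> \<not> E z x"
  using cycle_length_ge[of "[x, y, z]"] irrefl m_ge_2 by auto

lemma no_layer_m1_neighbour: "d v w = m - 1 \<Longrightarrow> E w x \<Longrightarrow> d v x \<noteq> m - 1"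
  using no_layer_neighbour_if_b_eq_2[of v w "m - 1" x] m_ge_2 m_less_D b_pred_m by auto

lemma unique_layer_m_parent:
  "d v w = m \<Longrightarrow> E w x \<Longrightarrow> E w y \<Longrightarrow> d v x = m - 1 \<Longrightarrow> d v y = m - 1 \<Longrightarrow> x = y"
  using unique_parent_if_c_eq_1[of v w x y] c_m m_ge_2 by auto

lemma unique_layer_m_neighbour:
  assumes "d v w = m" "E w x" "E w y" "d v x = m" "d v y = m"
  shows "x = y"
  using card_layer_neighbour_set_eq_1[OF assms(1)] m_ge_2 m_less_D b_m c_m assms(2-5)
    card_le_Suc0_iff_eq[of "{x. E w x \<and> d v x = m}"] by auto

lemma layer_m_neighbour_exists:
  assumes "d v w = m"
  shows "\<exists>x. E w x \<and> d v x = m"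
proof -
  have "card {x. E w x \<and> d v x = m} = 1"
    using card_layer_neighbour_set_eq_1[OF assms] m_ge_2 m_less_D b_m c_m by simp
  then show ?thesis by (auto simp: card_1_singleton_iff)
qed

lemma second_neighbour_in_layer_m1_exists:
  assumes ik: "d i k = m"
  shows "\<exists>s. d i s = m - 1 \<and> d s k = 2"
proof -
  obtain r where r: "E k r" "d i r = m" using layer_m_neighbour_exists[OF ik] by blast
  obtain s where s: "E r s" "d i s = m - 1"
    using parent_exists[of i r] r(2) m_ge_2 by auto
  obtain p where p: "E k p" "d i p = m - 1" using parent_exists[of i k] ik m_ge_2 by auto
  have "\<not> E s k"
  proof
    assume "E s k"
    then have "s = p" using unique_layer_m_parent[OF ik, of s p] sym s p by auto
    then show False using no_triangle[of p k r] p r s sym by auto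
  qed
  moreover have "s \<noteq> k" using s ik m_ge_2 by auto
  ultimately have "d s k = 2" using gdist_eq_2_if_path2[of s r k] s(1) r(1) sym by auto
  then show ?thesis using s by blast
qed

lemma layer_m_if_between:
  assumes "d j y = m - 1" "E y z" "E z x" "d j x = m"
  shows "d j z = m"
  using gdist_neighbour_le[of y z j] gdist_neighbour_le[of z x j] no_layer_m1_neighbour[OF assms(1,2)]
    assms m_ge_2 by linarith

lemma common_neighbour_in_layer_m2:
  assumes "d j q = m - 1" "d j y = m - 1" "q \<noteq> y" "E q w" "E w y"
  shows "d j w = m - 2"
proof -
  have "d j w \<noteq> m - 1" using no_layer_m1_neighbour[OF assms(1,4)] .
  moreover have "d j w \<noteq> m" using unique_layer_m_parent[of j w q y] assms sym by blast
  ultimately show ?thesis using gdist_neighbour_cases[OF assms(4), of j] assms(1) m_ge_2 by auto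
qed

text \<open>A second vertex \<open>y\<close> of layer \<open>m - 1\<close> at distance \<open>2\<close> from both would close the
  hexagon \<open>q l z\<^sub>1 y z\<^sub>2 l'\<close>, contradicting the girth for \<open>m \<ge> 4\<close>; the cases \<open>m = 2, 3\<close>
  need the intersection numbers as well.\<close>

lemma children_not_both_at_distance_2:
  assumes jq: "d j q = m - 1" and ql: "E q l" and ql': "E q l'" and ll': "l \<noteq> l'"
    and jl: "d j l = m" and jl': "d j l' = m"
    and jy: "d j y = m - 1" and yl: "d y l = 2"
  shows "d y l' \<noteq> 2"
proof
  assume yl': "d y l' = 2"
  obtain z\<^sub>1 where z\<^sub>1: "E y z\<^sub>1" "E z\<^sub>1 l" using gdist_eq_2E[OF yl] by blast
  obtain z\<^sub>2 where z\<^sub>2: "E y z\<^sub>2" "E z\<^sub>2 l'" using gdist_eq_2E[OF yl'] by blast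
  have jz\<^sub>1: "d j z\<^sub>1 = m" and jz\<^sub>2: "d j z\<^sub>2 = m"
    using layer_m_if_between[OF jy] z\<^sub>1 z\<^sub>2 jl jl' by blast+
  have qy: "q \<noteq> y" using ql yl gdist_eq_1_iff[of q l] by auto
  have nqy: "\<not> E q y" using no_layer_m1_neighbour[OF jq] jy by blast
  have z\<^sub>1\<^sub>2: "z\<^sub>1 \<noteq> z\<^sub>2" using unique_layer_m_neighbour[OF jz\<^sub>1, of l l'] z\<^sub>1 z\<^sub>2 jl jl' ll' by blast
  have two_parents: "\<not> (E x q \<and> E x y)" if "d j x = m" for x
    using unique_layer_m_parent[OF that, of q y] jq jy qy by blast
  have lz: "l \<noteq> z\<^sub>2" "l' \<noteq> z\<^sub>1" and nqz: "\<not> E q z\<^sub>1" "\<not> E q z\<^sub>2"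
    using two_parents[OF jl] two_parents[OF jl'] two_parents[OF jz\<^sub>1] two_parents[OF jz\<^sub>2]
      ql ql' z\<^sub>1 z\<^sub>2 sym by auto
  have "q \<noteq> z\<^sub>1" "q \<noteq> z\<^sub>2" using jq jz\<^sub>1 jz\<^sub>2 m_ge_2 by auto
  then have qz: "d q z\<^sub>1 = 2" "d q z\<^sub>2 = 2"
    using gdist_eq_2_if_path2[of q l z\<^sub>1] gdist_eq_2_if_path2[of q l' z\<^sub>2] ql ql' z\<^sub>1 z\<^sub>2 nqz sym
    by auto
  consider "m = 2" | "m = 3" | "4 \<le> m" using m_ge_2 by linarith
  then show False
  proof cases
    case 1
    \<comment> \<open>\<open>b 2 = 1\<close> gives \<open>y\<close> a neighbour at distance \<open>3\<close> from \<open>q\<close>, but its neighbours are \<open>j, z\<^sub>1, z\<^sub>2\<close>\<close>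
    then have "E j q" "E j y" using jq jy gdist_eq_1_iff by auto
    then have "d q y = 2" using gdist_eq_2_if_path2[of q j y] qy nqy sym by blast
    then obtain x where x: "E y x" "d q x = 3"
      using child_exists[of q y] m_less_D b_m 1 by auto
    have "j \<noteq> z\<^sub>1" "j \<noteq> z\<^sub>2"
      using jz\<^sub>1 jz\<^sub>2 m_ge_2 gdist_eq_0_iff[of j z\<^sub>1] gdist_eq_0_iff[of j z\<^sub>2] by auto
    then have "{x. E y x} = {j, z\<^sub>1, z\<^sub>2}"
      using neighbour_set_eq[of y j z\<^sub>1 z\<^sub>2] \<open>E j y\<close> z\<^sub>1 z\<^sub>2 z\<^sub>1\<^sub>2 sym by auto
    moreover have "d q j = 1" using \<open>E j q\<close> sym gdist_eq_1_iff by auto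
    ultimately show False using x qz by (auto simp: set_eq_iff)
  next
    case 2
    have "d q y \<le> 3" using gdist_path3_le[of q l z\<^sub>1 y] ql z\<^sub>1 sym by auto
    moreover have "d q y \<noteq> 0" "d q y \<noteq> 1" using qy nqy gdist_eq_0_iff gdist_eq_1_iff by auto
    ultimately consider "d q y = 3" | "d q y = 2" by linarith
    \<comment> \<open>\<open>z\<^sub>1, z\<^sub>2\<close> would be two parents of \<open>y\<close> seen from \<open>q\<close>, or \<open>w q l z\<^sub>1 y\<close> a pentagon\<close>
    then show False
    proof cases
      case 1
      then show False
        using unique_parent_if_c_eq_1[of q y z\<^sub>1 z\<^sub>2] c_m \<open>m = 3\<close> z\<^sub>1 z\<^sub>2 qz z\<^sub>1\<^sub>2 by simp
    next
      case 2
      then obtain w where w: "E q w" "E w y" by (rule gdist_eq_2E)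
      then have "d j w = 1" using common_neighbour_in_layer_m2[OF jq jy qy] \<open>m = 3\<close> by simp
      then have "distinct [w, q, l, z\<^sub>1, y]" using jq jl jy jz\<^sub>1 qy z\<^sub>1 irrefl \<open>m = 3\<close> by auto
      then show False using cycle_length_ge[of "[w, q, l, z\<^sub>1, y]"] w ql z\<^sub>1 sym \<open>m = 3\<close> by auto
    qed
  next
    case 3
    have "distinct [q, l, z\<^sub>1, y, z\<^sub>2, l']"
      using jq jl jl' jy jz\<^sub>1 jz\<^sub>2 qy ll' z\<^sub>1\<^sub>2 lz z\<^sub>1 z\<^sub>2 irrefl m_ge_2 by auto
    then show False using cycle_length_ge[of "[q, l, z\<^sub>1, y, z\<^sub>2, l']"] ql z\<^sub>1 z\<^sub>2 ql' sym 3 by auto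
  qed
qed

end

subsection \<open>Commutation at distance \<open>m\<close>\<close>

locale quantum_cubic_drg = cubic_drg E D b c for E :: "'v::finite \<Rightarrow> 'v \<Rightarrow> bool" and D b c +
  fixes u :: "'v \<Rightarrow> 'v \<Rightarrow> 'a::cstar_algebra" and m :: nat
  assumes rel: "quantum_aut_rel E u" and two_le_m: "2 \<le> m" and m_le_D: "m \<le> D"
    and commute_below_m: "\<forall>i j k l. d i k = d j l \<and> d i k \<le> m - 1 \<longrightarrow>
      u i j * u k l = u k l * u i j"
begin

lemma commute_if_gdist_eq_less_m:
  assumes "d i k = d j l" "d i k < m"
  shows "u i j * u k l = u k l * u i j"
proof -
  have "d i k \<le> m - 1" using assms(2) by linarith
  then show ?thesis using commute_below_m[rule_format, of i k j l] assms(1) by simp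
qed

lemma orthogonal_if_gdist_ne: "i \<noteq> k \<Longrightarrow> j \<noteq> l \<Longrightarrow> d i k \<noteq> d j l \<Longrightarrow> u i j * u k l = 0"
  by (rule quantum_aut_rel_gdist_orthogonal[OF rel])

lemma mult_eq_sum_over_parents:
  assumes ik: "d i k = m" and jl: "d j l = m" and p: "E k p" "d i p = m - 1"
  shows "u i j * u k l = (\<Sum>q\<in>{q. E l q \<and> d j q = m - 1}. u i j * u p q * u k l)"
proof -
  have "u i j * u p q * u k l = 0" if q: "\<not> (E l q \<and> d j q = m - 1)" for q
  proof (cases "E l q")
    case False
    moreover have "E p k" using p(1) sym by blast
    ultimately have "u p q * u k l = 0" using quantum_aut_rel_adjacency[OF rel, of p k q l] sym by auto
    then show ?thesis by (simp add: mult.assoc)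
  next
    case True
    then have "q \<noteq> j" using jl two_le_m gdist_eq_1_iff[of j l] sym by auto
    moreover have "i \<noteq> p" using p(2) two_le_m gdist_eq_0_iff[of i p] by auto
    ultimately show ?thesis using orthogonal_if_gdist_ne[of i p j q] p(2) q True by simp
  qed
  then have "(\<Sum>q\<in>UNIV. u i j * u p q * u k l) = (\<Sum>q\<in>{q. E l q \<and> d j q = m - 1}. u i j * u p q * u k l)"
    by (intro sum.mono_neutral_right) auto
  then show ?thesis using mult_eq_sum_insert_row[OF rel, of "u i j" "u k l" p] by simp
qed

text \<open>A child \<open>l' \<noteq> l\<close> of \<open>q\<close> lies outside layer \<open>m\<close> because \<open>b (m - 1) = 1\<close>, so
  \<open>u i j u k l' = 0\<close>; the exceptional child \<open>l' = j\<close> for \<open>m = 2\<close> is excluded by \<open>b 1 \<noteq> 1\<close>.\<close>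

lemma parent_row_annihilates_sibling:
  assumes b1: "b (m - 1) = 1" and ik: "d i k = m" and jl: "d j l = m"
    and p: "E k p" "d i p = m - 1" and q: "E l q" "d j q = m - 1" and l': "l' \<noteq> l"
  shows "u i j * u p q * u k l' = 0"
proof (cases "E q l'")
  case False
  moreover have "E p k" using p(1) sym by blast
  ultimately have "u p q * u k l' = 0" using quantum_aut_rel_adjacency[OF rel, of p k q l'] by auto
  then show ?thesis by (simp add: mult.assoc)
next
  case True
  have "E q l" using q(1) sym by blast
  have "d j l' \<noteq> m"
  proof
    assume "d j l' = m"
    then have "l = l'"
      using unique_child_if_b_eq_1[of j q l l'] b1 q(2) \<open>E q l\<close> True jl two_le_m m_le_D by simp
    then show False using l' by simp
  qed
  moreover have "j \<noteq> l'"
  proof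
    assume "j = l'"
    then have "m = 2" using True q(2) gdist_eq_1_iff[of l' q] sym two_le_m by auto
    then show False using b1_ne_1 b1 m_le_D by simp
  qed
  moreover have "i \<noteq> k" using ik two_le_m gdist_eq_0_iff[of i k] by auto
  ultimately have "u i j * u k l' = 0" using orthogonal_if_gdist_ne[of i k j l'] ik by simp
  moreover have "u i j * u p q = u p q * u i j"
    using commute_if_gdist_eq_less_m[of i p j q] p q two_le_m by simp
  ultimately show ?thesis by (metis mult.assoc mult_zero_right)
qed

lemma commute_if_b_pred_m_eq_1:
  assumes b1: "b (m - 1) = 1" and ik: "d i k = m" and jl: "d j l = m"
  shows "u i j * u k l = u k l * u i j"
proof -
  obtain p where p: "E k p" "d i p = m - 1" using parent_exists[of i k] ik two_le_m by auto
  define Q where "Q = {q. E l q \<and> d j q = m - 1}"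
  have "u i j * (\<Sum>q\<in>Q. u p q) = (\<Sum>q\<in>Q. u p q) * u i j"
    using commute_if_gdist_eq_less_m[of i p j] p two_le_m
    by (intro mult_sum_commute) (simp add: Q_def)
  then show ?thesis
  proof (rule commute_if_absorbing_witness[OF rel quantum_aut_rel_sum_selfadjoint[OF rel]])
    show "u i j * (\<Sum>q\<in>Q. u p q) * u k l' = 0" if "l' \<noteq> l" for l'
      using parent_row_annihilates_sibling[OF b1 ik jl p _ _ that] unfolding Q_def
      by (simp add: sum_distrib_left sum_distrib_right)
    show "u i j * (\<Sum>q\<in>Q. u p q) * u k l = u i j * u k l"
      using mult_eq_sum_over_parents[OF ik jl p] unfolding Q_def
      by (simp add: sum_distrib_left sum_distrib_right)
  qed
qed

end

locale quantum_cubic_drg_ii =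
  quantum_cubic_drg E D b c u m + cubic_drg_ii E D b c m
  for E :: "'v::finite \<Rightarrow> 'v \<Rightarrow> bool" and D b c and u :: "'v \<Rightarrow> 'v \<Rightarrow> 'a::cstar_algebra" and m
begin

lemma mult_eq_insert_parent:
  assumes ik: "d i k = m" and jl: "d j l = m" and p: "E k p" "d i p = m - 1"
    and q: "E l q" "d j q = m - 1"
  shows "u i j * u k l = u i j * u p q * u k l"
proof -
  have "{q'. E l q' \<and> d j q' = m - 1} = {q}"
    using unique_layer_m_parent[OF jl _ q(1) _ q(2)] q by blast
  then show ?thesis using mult_eq_sum_over_parents[OF ik jl p] by simp
qed

definition layer_m1_second_neighbours :: "'v \<Rightarrow> 'v \<Rightarrow> 'v set" where
  "layer_m1_second_neighbours j l = {y. d j y = m - 1 \<and> d y l = 2}"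

lemma mult_eq_insert_layer_m1_second_neighbours:
  assumes ik: "d i k = m" and jl: "d j l = m" and s: "d i s = m - 1" "d s k = 2"
  shows "u i j * u k l = u i j * (\<Sum>y\<in>layer_m1_second_neighbours j l. u s y) * u k l"
proof -
  have ne: "i \<noteq> s" "s \<noteq> k" "j \<noteq> l"
    using ik jl s two_le_m gdist_eq_0_iff[of i s] gdist_eq_0_iff[of s k] gdist_eq_0_iff[of j l]
    by auto
  have "u i j * u s y * u k l = 0" if y: "y \<notin> layer_m1_second_neighbours j l" for y
  proof (cases "d j y = m - 1")
    case True
    then have "d y l \<noteq> 2" "y \<noteq> l" using y jl two_le_m unfolding layer_m1_second_neighbours_def by auto
    then have "u s y * u k l = 0" using orthogonal_if_gdist_ne[of s k y l] ne s by simp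
    then show ?thesis by (simp add: mult.assoc)
  next
    case False
    consider "y \<noteq> j" | "y = j" "m = 2" | "y = j" "m \<noteq> 2" by blast
    then show ?thesis
    proof cases
      case 1
      then show ?thesis using orthogonal_if_gdist_ne[of i s j y] ne s False by simp
    next
      case 2
      then have "E i s" using s gdist_eq_1_iff by simp
      then show ?thesis using quantum_aut_rel_adjacency[OF rel, of i s j y] 2 irrefl by simp
    next
      case 3
      then have "u s y * u k l = 0" using orthogonal_if_gdist_ne[of s k y l] ne s jl by simp
      then show ?thesis by (simp add: mult.assoc)
    qed
  qed
  then have "(\<Sum>y\<in>UNIV. u i j * u s y * u k l) = (\<Sum>y\<in>layer_m1_second_neighbours j l. u i j * u s y * u k l)"
    by (intro sum.mono_neutral_right) auto
  then show ?thesis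
    using mult_eq_sum_insert_row[OF rel, of "u i j" "u k l" s]
    by (simp add: sum_distrib_left sum_distrib_right)
qed

text \<open>Here the girth enters: a surviving term would give a vertex of
  \<open>layer_m1_second_neighbours j l\<close> at distance \<open>2\<close> from both children of \<open>q\<close>.\<close>

lemma layer_m1_second_neighbours_annihilates_sibling:
  assumes ik: "d i k = m" and jl: "d j l = m" and s: "d i s = m - 1" "d s k = 2"
    and q: "E q l" "d j q = m - 1" and ql': "E q l'" and l': "l' \<noteq> l"
  shows "u i j * (\<Sum>y\<in>layer_m1_second_neighbours j l. u s y) * u k l' = 0"
proof -
  have "u i j * u s y * u k l' = 0" if y: "y \<in> layer_m1_second_neighbours j l" for y
  proof -
    have jy: "d j y = m - 1" and yl: "d y l = 2" using y unfolding layer_m1_second_neighbours_def by auto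
    have "s \<noteq> k" using s(2) gdist_eq_0_iff[of s k] by auto
    consider "d j l' = m" | "l' = j" | "d j l' \<noteq> m" "l' \<noteq> j" by blast
    then show ?thesis
    proof cases
      case 1
      then have "d y l' \<noteq> 2"
        using children_not_both_at_distance_2[OF q(2,1) ql' l'[symmetric] jl _ jy yl] by blast
      moreover have "y \<noteq> l'" using 1 jy two_le_m by auto
      ultimately have "u s y * u k l' = 0" using orthogonal_if_gdist_ne[of s k y l'] \<open>s \<noteq> k\<close> s by simp
      then show ?thesis by (simp add: mult.assoc)
    next
      case 2
      then have "m = 2" using ql' q(2) gdist_eq_1_iff[of j q] sym two_le_m by auto
      then have "y \<noteq> j" "d y j = 1" using jy gdist_eq_0_iff[of j y] gdist_sym[of y j] by auto
      then have "u s y * u k l' = 0" using orthogonal_if_gdist_ne[of s k y l'] \<open>s \<noteq> k\<close> s 2 by simp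
      then show ?thesis by (simp add: mult.assoc)
    next
      case 3
      have "i \<noteq> k" using ik two_le_m gdist_eq_0_iff[of i k] by auto
      then have "u i j * u k l' = 0" using orthogonal_if_gdist_ne[of i k j l'] ik 3 by simp
      moreover have "u i j * u s y = u s y * u i j"
        using commute_if_gdist_eq_less_m[of i s j y] s jy two_le_m by simp
      ultimately show ?thesis by (metis mult.assoc mult_zero_right)
    qed
  qed
  then show ?thesis by (simp add: sum_distrib_left sum_distrib_right)
qed

text \<open>Case (ii): the witness is \<open>P S P\<close> with \<open>P = u p q\<close> for the unique parents \<open>p\<close>, \<open>q\<close> of
  \<open>k\<close>, \<open>l\<close>, and \<open>S\<close> the sum of \<open>u s y\<close> over \<open>layer_m1_second_neighbours j l\<close>.\<close>

lemma commute_at_distance_m: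
  assumes ik: "d i k = m" and jl: "d j l = m"
  shows "u i j * u k l = u k l * u i j"
proof -
  obtain p where p: "E k p" "d i p = m - 1" using parent_exists[of i k] ik two_le_m by auto
  obtain q where q: "E l q" "d j q = m - 1" using parent_exists[of j l] jl two_le_m by auto
  obtain s where s: "d i s = m - 1" "d s k = 2" using second_neighbour_in_layer_m1_exists[OF ik] by blast
  define P where "P = u p q"
  define S where "S = (\<Sum>y\<in>layer_m1_second_neighbours j l. u s y)"
  have AP: "u i j * P = P * u i j"
    unfolding P_def using commute_if_gdist_eq_less_m[of i p j q] p q two_le_m by simp
  have AS: "u i j * S = S * u i j"
    unfolding S_def using commute_if_gdist_eq_less_m[of i s j] s two_le_m
    by (intro mult_sum_commute) (simp add: layer_m1_second_neighbours_def)
  have PC: "P * u k l' = u k l' * P" if "E q l'" for l'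
  proof -
    have "d p k = 1" "d q l' = 1" using p(1) that sym gdist_eq_1_iff by auto
    then show ?thesis unfolding P_def using commute_if_gdist_eq_less_m[of p k q l'] two_le_m by simp
  qed
  have ql: "E q l" using q(1) sym by simp
  have "cstar (P * S * P) = P * S * P"
    unfolding P_def S_def by (simp add: cstar_mult quantum_aut_rel_selfadjoint[OF rel]
      quantum_aut_rel_sum_selfadjoint[OF rel] mult.assoc)
  then show ?thesis
  proof (rule commute_if_absorbing_witness[OF rel _ commute_sandwich[OF AP AS]])
    show "u i j * (P * S * P) * u k l' = 0" if l': "l' \<noteq> l" for l'
    proof (cases "E q l'")
      case True
      then show ?thesis using sandwich_annihilated[OF AP PC[OF True]]
        layer_m1_second_neighbours_annihilates_sibling[OF ik jl s ql q(2) True l'] unfolding S_def by blast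
    next
      case False
      have "E p k" using p(1) sym by simp
      then have "P * u k l' = 0" unfolding P_def using quantum_aut_rel_adjacency[OF rel] False by blast
      then show ?thesis by (simp add: mult.assoc)
    qed
    have "P * P = P" unfolding P_def by (rule quantum_aut_rel_idempotent[OF rel])
    moreover have "u i j * S * u k l = u i j * u k l"
      unfolding S_def using mult_eq_insert_layer_m1_second_neighbours[OF ik jl s] by simp
    moreover have "u i j * P * u k l = u i j * u k l"
      unfolding P_def using mult_eq_insert_parent[OF ik jl p q] by simp
    ultimately show "u i j * (P * S * P) * u k l = u i j * u k l"
      by (rule sandwich_absorbed[OF AP PC[OF ql]])
  qed
qed

end

theorem lemma5p4:
  fixes E :: "'v::finite \<Rightarrow> 'v \<Rightarrow> bool"
    and u :: "'v \<Rightarrow> 'v \<Rightarrow> 'a::cstar_algebra"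
    and D m :: nat and b c :: "nat \<Rightarrow> nat"
  assumes sym: "\<forall>x y. E x y = E y x"
    and irrefl: "\<forall>x. \<not> E x x"
    and cubic: "\<forall>x. card {y. E x y} = 3"
    and drg: "distance_regular E D b c"
    and m: "2 \<le> m" "m \<le> D"
    and rel: "quantum_aut_rel E u"
    and hyp: "\<forall>i j k l. gdist E i k = gdist E j l \<and> gdist E i k \<le> m - 1 \<longrightarrow>
                u i j * u k l = u k l * u i j"
    and cond: "b (m - 1) = 1 \<or>
               (m < D \<and> b (m - 1) = 2 \<and> b m = 1 \<and> c m = 1 \<and> girth E \<ge> enat (2 * m))"
  shows "\<forall>i j k l. gdist E i k = m \<and> gdist E j l = m \<longrightarrow>
           u i j * u k l = u k l * u i j"
proof -
  interpret quantum_cubic_drg E D b c u m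
    using sym irrefl cubic drg m rel hyp by unfold_locales
  from cond show ?thesis
  proof
    assume "b (m - 1) = 1"
    then show ?thesis using commute_if_b_pred_m_eq_1 by blast
  next
    assume "m < D \<and> b (m - 1) = 2 \<and> b m = 1 \<and> c m = 1 \<and> girth E \<ge> enat (2 * m)"
    then interpret quantum_cubic_drg_ii E D b c u m
      using m by unfold_locales auto
    show ?thesis using commute_at_distance_m by blast
  qed
qed

end
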